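(* Let $F=P_{\ell_1}\cup\cdots\cup P_{\ell_k}$ be a linear forest with $\ell_1\ge\cdots\ge\ell_k\ge2$, $\ell_i\neq3$ for all $i$, and $F$ not of the form $kP_5$. Let $G$ be a graph containing disjoint vertex sets $X,Y$ with $|X|=\delta_F$ and $|Y|\ge |F|-\delta_F$ such that every vertex of $X$ is adjacent to every vertex of $Y$. Then $G$ contains $F$ as a subgraph provided one of the following holds: (a) some $\ell_i$ is even and $G-(X\cup Y)$ contains an edge $v_1v_2$ such that $v_1$ is adjacent to some vertex $x_1\in X$; (b) every $\ell_i$ is odd and $G-(X\cup Y)$ contains a path $v_1v_2v_3$ such that $v_1$ is adjacent to some vertex $x_1\in X$; (c) every $\ell_i$ is odd and $G-(X\cup Y)$ contains two vertex-disjoint edges $v_1v_2$, $v_3v_4$ such that $v_1x_1$ and $v_3x_2$ are edges of $G$ for some distinct $x_1,x_2\in X$.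
   Context: $P_m$ is the path on $m$ vertices; $kP_5$ denotes $k$ disjoint copies of $P_5$. $|F|=\sum\ell_i$ and $\delta_F=\sum_{i=1}^k\lfloor \ell_i/2\rfloor-1$. For $S\subseteq V(G)$, $G-S$ is the graph obtained by deleting the vertices of $S$. *)

theory Defs
  imports Main
begin

definition simple_graph :: "'a set \<Rightarrow> ('a \<Rightarrow> 'a \<Rightarrow> bool) \<Rightarrow> bool" where
  "simple_graph V E \<longleftrightarrow> finite V \<and> (\<forall>u v. E u v \<longrightarrow> E v u) \<and> (\<forall>u. \<not> E u u)
     \<and> (\<forall>u v. E u v \<longrightarrow> u \<in> V \<and> v \<in> V)"

text \<open>The linear forest P_{l_1} \<union> ... \<union> P_{l_k} given by the list ls = [l_1,...,l_k]:
  vertex (i,j) is the j-th vertex of the i-th path; edges (i,j)--(i,j+1).\<close>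
definition lf_verts :: "nat list \<Rightarrow> (nat \<times> nat) set" where
  "lf_verts ls = {(i, j). i < length ls \<and> j < ls ! i}"

definition contains_lf :: "'a set \<Rightarrow> ('a \<Rightarrow> 'a \<Rightarrow> bool) \<Rightarrow> nat list \<Rightarrow> bool" where
  "contains_lf V E ls \<longleftrightarrow> (\<exists>f. inj_on f (lf_verts ls) \<and> f ` lf_verts ls \<subseteq> V \<and>
      (\<forall>i j. i < length ls \<and> Suc j < ls ! i \<longrightarrow> E (f (i, j)) (f (i, Suc j))))"

definition lf_size :: "nat list \<Rightarrow> nat" where
  "lf_size ls = sum_list ls"

text \<open>\<delta>_F = sum of floor(l_i/2) minus 1 (nonnegative when all l_i \<ge> 2 and k \<ge> 1).\<close>
definition lf_delta :: "nat list \<Rightarrow> int" where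
  "lf_delta ls = int (sum_list (map (\<lambda>l. l div 2) ls)) - 1"

end

theory Submission
  imports Defs
begin

(*
  Give a path on l vertices the X-cost floor(l/2) and the Y-cost ceil(l/2): since X is completely
  joined to Y, paths alternating between Y and X realise any list of components within these
  costs.  The costs of F add up to delta_F + 1 and |F| - delta_F - 1, so X alone is exactly one
  vertex short.  The edges outside X \<union> Y repair this: one component is built as an outside
  path v2 v1 (in (a), for an even component) or v3 v2 v1 (in (b)) continued into X at x1, or as
  an alternating path from x1 to x2 framed by the two outside edges (in (c), for a component of
  length at least 7, which exists because no l_i is 3 or 5).  Such a path spends one X-vertex
  less than its X-cost, and the other components are alternating paths in what remains.
*)

fun interleave :: "'a list \<Rightarrow> 'a list \<Rightarrow> 'a list" where
  "interleave [] ys = []"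
| "interleave (x # xs) [] = [x]"
| "interleave (x # xs) (y # ys) = x # y # interleave xs ys"

lemma length_interleave:
  "length xs = length ys \<or> length xs = Suc (length ys) \<Longrightarrow>
   length (interleave xs ys) = length xs + length ys"
  by (induction xs ys rule: interleave.induct) auto

lemma set_interleave_subset: "set (interleave xs ys) \<subseteq> set xs \<union> set ys"
  by (induction xs ys rule: interleave.induct) auto

lemma set_interleave:
  "length xs = length ys \<or> length xs = Suc (length ys) \<Longrightarrow>
   set (interleave xs ys) = set xs \<union> set ys"
  by (induction xs ys rule: interleave.induct) auto

lemma distinct_interleave:
  "distinct xs \<Longrightarrow> distinct ys \<Longrightarrow> set xs \<inter> set ys = {} \<Longrightarrow> distinct (interleave xs ys)"
  by (induction xs ys rule: interleave.induct) (use set_interleave_subset in fastforce)+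

lemma interleave_eq_Nil_iff [simp]: "interleave xs ys = [] \<longleftrightarrow> xs = []"
  by (cases "(xs, ys)" rule: interleave.cases) auto

lemma hd_interleave: "xs \<noteq> [] \<Longrightarrow> hd (interleave xs ys) = hd xs"
  by (cases "(xs, ys)" rule: interleave.cases) auto

lemma last_interleave:
  "length xs = Suc (length ys) \<Longrightarrow> last (interleave xs ys) = last xs"
  by (induction xs ys rule: interleave.induct) auto

lemma successively_interleave:
  assumes "\<And>x y. x \<in> set xs \<Longrightarrow> y \<in> set ys \<Longrightarrow> E x y \<and> E y x"
  shows "successively E (interleave xs ys)"
  using assms
proof (induction xs ys rule: interleave.induct)
  case (3 x xs y ys)
  then show ?case
    using hd_interleave[of xs ys] by (cases xs) (auto simp: successively_Cons)
qed simp_all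

lemma exists_distinct_list:
  assumes "finite A" "n \<le> card A"
  obtains xs where "distinct xs" "length xs = n" "set xs \<subseteq> A"
proof -
  obtain B where B: "B \<subseteq> A" "card B = n"
    using obtain_subset_with_card_n[OF assms(2)] by blast
  obtain xs where xs: "set xs = B" "distinct xs"
    using finite_distinct_list finite_subset[OF B(1) assms(1)] by blast
  have "length xs = n"
    using distinct_card[OF xs(2)] xs(1) B(2) by simp
  then show ?thesis
    using that xs B(1) by blast
qed

lemma sum_list_map_remove_nth:
  fixes f :: "'a \<Rightarrow> 'b::comm_monoid_add"
  shows "i < length xs \<Longrightarrow>
    sum_list (map f xs) = f (xs ! i) + sum_list (map f (take i xs @ drop (Suc i) xs))"
  by (subst (1) id_take_nth_drop[of i xs]) (simp_all add: add.left_commute)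

lemma disjoint_nth_if_distinct_concat:
  assumes "distinct (concat ps)" "i < i'" "i' < length ps"
  shows "set (ps ! i) \<inter> set (ps ! i') = {}"
proof -
  have "concat ps = concat (take i' ps) @ ps ! i' @ concat (drop (Suc i') ps)"
    using id_take_nth_drop[OF assms(3)] by (metis concat.simps(2) concat_append)
  then have "set (concat (take i' ps)) \<inter> set (ps ! i') = {}"
    using assms(1) by (metis distinct_append Int_Un_distrib set_append sup_eq_bot_iff)
  moreover have "ps ! i \<in> set (take i' ps)"
  proof -
    have "take i' ps ! i = ps ! i" "i < length (take i' ps)"
      using assms(2,3) by auto
    then show ?thesis by (metis nth_mem)
  qed
  ultimately show ?thesis by auto
qed

definition lf_paths :: "'a set \<Rightarrow> ('a \<Rightarrow> 'a \<Rightarrow> bool) \<Rightarrow> 'a list list \<Rightarrow> nat list \<Rightarrow> bool" where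
  "lf_paths V E ps ls \<longleftrightarrow> list_all2 (\<lambda>p l. length p = l) ps ls \<and> distinct (concat ps) \<and>
     set (concat ps) \<subseteq> V \<and> (\<forall>p\<in>set ps. successively E p)"

lemma lf_paths_mono: "lf_paths V E ps ls \<Longrightarrow> V \<subseteq> W \<Longrightarrow> lf_paths W E ps ls"
  unfolding lf_paths_def by blast

lemma contains_lf_if_lf_paths:
  assumes "lf_paths V E ps ls"
  shows "contains_lf V E ls"
proof -
  have len: "length ps = length ls" and len_nth: "\<And>i. i < length ls \<Longrightarrow> length (ps ! i) = ls ! i"
    using assms unfolding lf_paths_def by (auto simp: list_all2_conv_all_nth)
  have distinct: "distinct (concat ps)" and in_V: "set (concat ps) \<subseteq> V"
    and paths: "\<forall>p\<in>set ps. successively E p"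
    using assms unfolding lf_paths_def by auto
  define f where "f = (\<lambda>(i, j). ps ! i ! j)"
  have "inj_on f (lf_verts ls)"
  proof (rule inj_onI)
    fix a b assume "a \<in> lf_verts ls" "b \<in> lf_verts ls" and eq: "f a = f b"
    then obtain i j i' j' where a: "a = (i, j)" "i < length ls" "j < ls ! i"
      and b: "b = (i', j')" "i' < length ls" "j' < ls ! i'"
      unfolding lf_verts_def by blast
    have in_i: "f a \<in> set (ps ! i)" and in_i': "f b \<in> set (ps ! i')"
      using a b len_nth by (auto simp: f_def)
    have "i = i'"
    proof (rule ccontr)
      assume "i \<noteq> i'"
      then have "set (ps ! i) \<inter> set (ps ! i') = {}"
        using disjoint_nth_if_distinct_concat[OF distinct] a(2) b(2) len
        by (metis Int_commute linorder_neqE_nat)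
      then show False using in_i in_i' eq by auto
    qed
    moreover have "distinct (ps ! i)"
      using distinct a(2) len by (simp add: distinct_concat_iff)
    ultimately show "a = b"
      using eq a b len_nth by (simp add: f_def nth_eq_iff_index_eq)
  qed
  moreover have "f ` lf_verts ls \<subseteq> V"
  proof (clarsimp simp: lf_verts_def f_def)
    fix i j assume "i < length ls" "j < ls ! i"
    then have "ps ! i ! j \<in> set (concat ps)"
      using len len_nth by (auto intro!: bexI[of _ "ps ! i"])
    then show "ps ! i ! j \<in> V" using in_V by blast
  qed
  moreover have "E (f (i, j)) (f (i, Suc j))" if "i < length ls" "Suc j < ls ! i" for i j
  proof -
    have "successively E (ps ! i)" using paths that(1) len by simp
    then show ?thesis using that len_nth by (simp add: f_def successively_nth)
  qed
  ultimately show ?thesis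
    unfolding contains_lf_def by blast
qed

lemma lf_paths_insert_nth:
  assumes "lf_paths V E ps ls" "i \<le> length ls"
    and "length p = l" "distinct p" "set p \<subseteq> V" "successively E p"
    and "set p \<inter> set (concat ps) = {}"
  shows "lf_paths V E (take i ps @ p # drop i ps) (take i ls @ l # drop i ls)"
proof -
  have paths: "list_all2 (\<lambda>p l. length p = l) ps ls"
    using assms(1) unfolding lf_paths_def by blast
  have split: "concat ps = concat (take i ps) @ concat (drop i ps)"
    by (metis append_take_drop_id concat_append)
  have "list_all2 (\<lambda>p l. length p = l) (take i ps @ p # drop i ps) (take i ls @ l # drop i ls)"
    using paths assms(3) by (intro list_all2_appendI list_all2_takeI list_all2_dropI) auto
  moreover have "distinct (concat (take i ps @ p # drop i ps))"
  proof -
    have "distinct (concat (take i ps) @ concat (drop i ps))"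
      using assms(1) unfolding lf_paths_def split by blast
    moreover have "set p \<inter> set (concat (take i ps) @ concat (drop i ps)) = {}"
      using assms(7) unfolding split .
    ultimately show ?thesis
      using assms(4) by (simp add: distinct_append) blast
  qed
  moreover have "set (concat (take i ps @ p # drop i ps)) \<subseteq> V"
  proof -
    have "set (concat (take i ps) @ concat (drop i ps)) \<subseteq> V"
      using assms(1) unfolding lf_paths_def split by blast
    then show ?thesis using assms(5) by simp
  qed
  moreover have "\<forall>q\<in>set (take i ps @ p # drop i ps). successively E q"
    using assms(1,6) unfolding lf_paths_def by (auto dest: in_set_takeD in_set_dropD)
  ultimately show ?thesis
    unfolding lf_paths_def by blast
qed

locale complete_join =
  fixes V :: "'a set" and E :: "'a \<Rightarrow> 'a \<Rightarrow> bool" and X Y :: "'a set"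
  assumes sym_E: "\<And>u v. E u v \<Longrightarrow> E v u"
    and complete: "\<And>x y. x \<in> X \<Longrightarrow> y \<in> Y \<Longrightarrow> E x y"
    and disjoint: "X \<inter> Y = {}"
    and finite_X: "finite X" and finite_Y: "finite Y"
    and X_subset: "X \<subseteq> V" and Y_subset: "Y \<subseteq> V"
begin

lemma path_interleave:
  assumes "distinct xs" "distinct ys" "set xs \<subseteq> X \<and> set ys \<subseteq> Y \<or> set xs \<subseteq> Y \<and> set ys \<subseteq> X"
  shows "distinct (interleave xs ys)" "successively E (interleave xs ys)"
proof -
  show "distinct (interleave xs ys)"
    using assms disjoint by (intro distinct_interleave) auto
  show "successively E (interleave xs ys)"
    using assms complete sym_E by (intro successively_interleave) blast
qed

lemma lf_paths_alternating:
  assumes "A \<subseteq> X" "B \<subseteq> Y"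
    and "(\<Sum>l\<leftarrow>ls. l div 2) \<le> card A" "(\<Sum>l\<leftarrow>ls. l - l div 2) \<le> card B"
  shows "\<exists>ps. lf_paths (A \<union> B) E ps ls"
  using assms
proof (induction ls arbitrary: A B)
  case Nil
  then show ?case by (auto simp: lf_paths_def)
next
  case (Cons l ls)
  have fin: "finite A" "finite B"
    using Cons.prems(1,2) finite_X finite_Y finite_subset by blast+
  have budget_A: "l div 2 + (\<Sum>l\<leftarrow>ls. l div 2) \<le> card A"
    and budget_B: "(l - l div 2) + (\<Sum>l\<leftarrow>ls. l - l div 2) \<le> card B"
    using Cons.prems(3,4) by (simp_all only: list.map sum_list.Cons)
  obtain xs where xs: "distinct xs" "length xs = l div 2" "set xs \<subseteq> A"
    using exists_distinct_list[OF fin(1), of "l div 2"] budget_A by auto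
  obtain ys where ys: "distinct ys" "length ys = l - l div 2" "set ys \<subseteq> B"
    using exists_distinct_list[OF fin(2), of "l - l div 2"] budget_B by auto
  have "card (A - set xs) = card A - l div 2" "card (B - set ys) = card B - (l - l div 2)"
    using xs ys fin by (simp_all add: card_Diff_subset distinct_card)
  then have "(\<Sum>l\<leftarrow>ls. l div 2) \<le> card (A - set xs)"
    "(\<Sum>l\<leftarrow>ls. l - l div 2) \<le> card (B - set ys)"
    using budget_A budget_B by arith+
  then obtain ps where ps: "lf_paths ((A - set xs) \<union> (B - set ys)) E ps ls"
    using Cons.IH[of "A - set xs" "B - set ys"] Cons.prems(1,2) by blast
  define p where "p = interleave ys xs"
  have lengths: "length ys = length xs \<or> length ys = Suc (length xs)"
    using xs(2) ys(2) by presburger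
  have "length p = l"
    using length_interleave[OF lengths] xs(2) ys(2) unfolding p_def by simp
  moreover have "set p = set ys \<union> set xs"
    using set_interleave[OF lengths] unfolding p_def .
  moreover have "distinct p" "successively E p"
    using path_interleave[of ys xs] xs ys Cons.prems(1,2) unfolding p_def by auto
  moreover have "set p \<subseteq> A \<union> B" "set p \<inter> set (concat ps) = {}"
  proof -
    have "set (concat ps) \<subseteq> (A - set xs) \<union> (B - set ys)"
      using ps unfolding lf_paths_def by blast
    moreover have "A \<inter> B = {}"
      using Cons.prems(1,2) disjoint by blast
    ultimately show "set p \<subseteq> A \<union> B" "set p \<inter> set (concat ps) = {}"
      using \<open>set p = set ys \<union> set xs\<close> xs(3) ys(3) by blast+
  qed
  ultimately have "lf_paths (A \<union> B) E (p # ps) (l # ls)"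
    using lf_paths_insert_nth[OF lf_paths_mono[OF ps], of "A \<union> B" 0 p l] by auto
  then show ?case ..
qed

definition saving_path :: "nat \<Rightarrow> 'a list \<Rightarrow> bool" where
  "saving_path l p \<longleftrightarrow> length p = l \<and> distinct p \<and> set p \<subseteq> V \<and> successively E p \<and>
     card (set p \<inter> X) < l div 2 \<and> card (set p \<inter> Y) \<le> l - l div 2"

lemma contains_lf_if_saving_path:
  assumes budget_X: "(\<Sum>l\<leftarrow>ls. l div 2) \<le> card X + 1"
    and budget_Y: "(\<Sum>l\<leftarrow>ls. l - l div 2) \<le> card Y"
    and "i < length ls" "saving_path (ls ! i) p"
  shows "contains_lf V E ls"
proof -
  define l where "l = ls ! i"
  define ls' where "ls' = take i ls @ drop (Suc i) ls"
  have ls: "take i ls' @ l # drop i ls' = ls"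
    using id_take_nth_drop[OF assms(3)] assms(3) by (simp add: ls'_def l_def)
  note sum_ls = sum_list_map_remove_nth[OF assms(3), folded l_def ls'_def]
  have p: "length p = l" "distinct p" "set p \<subseteq> V" "successively E p"
    "card (set p \<inter> X) < l div 2" "card (set p \<inter> Y) \<le> l - l div 2"
    using assms(4) unfolding saving_path_def l_def by auto
  have "card (X - set p) = card X - card (set p \<inter> X)"
    "card (Y - set p) = card Y - card (set p \<inter> Y)"
    using finite_X finite_Y by (simp_all add: card_Diff_subset_Int Int_commute)
  moreover have "(\<Sum>l\<leftarrow>ls. l div 2) = l div 2 + (\<Sum>l\<leftarrow>ls'. l div 2)"
    "(\<Sum>l\<leftarrow>ls. l - l div 2) = (l - l div 2) + (\<Sum>l\<leftarrow>ls'. l - l div 2)"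
    by (rule sum_ls)+
  ultimately have "(\<Sum>l\<leftarrow>ls'. l div 2) \<le> card (X - set p)"
    "(\<Sum>l\<leftarrow>ls'. l - l div 2) \<le> card (Y - set p)"
    using budget_X budget_Y p(5,6) by linarith+
  then obtain ps where ps: "lf_paths ((X - set p) \<union> (Y - set p)) E ps ls'"
    using lf_paths_alternating[of "X - set p" "Y - set p" ls'] by blast
  have "set p \<inter> set (concat ps) = {}"
    using ps unfolding lf_paths_def by blast
  moreover have "i \<le> length ls'"
    using assms(3) unfolding ls'_def by simp
  moreover have "X - set p \<union> (Y - set p) \<subseteq> V"
    using X_subset Y_subset by blast
  ultimately have "lf_paths V E (take i ps @ p # drop i ps) (take i ls' @ l # drop i ls')"
    using lf_paths_insert_nth[OF lf_paths_mono[OF ps] _ p(1-4)] by blast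
  then show ?thesis
    unfolding ls by (rule contains_lf_if_lf_paths)
qed

lemma alternating_path_from:
  assumes "x1 \<in> X" "0 < h" "h \<le> card X" "h \<le> card Y"
  obtains q where "hd q = x1" "distinct q" "successively E q" "length q = 2 * h"
    "set q \<subseteq> X \<union> Y" "card (set q \<inter> X) = h" "card (set q \<inter> Y) = h"
proof -
  have "h - 1 \<le> card (X - {x1})"
    using assms(1,3) finite_X by simp
  then obtain xs where xs: "distinct xs" "length xs = h - 1" "set xs \<subseteq> X - {x1}"
    using exists_distinct_list[of "X - {x1}"] finite_X by blast
  obtain ys where ys: "distinct ys" "length ys = h" "set ys \<subseteq> Y"
    using exists_distinct_list[OF finite_Y assms(4)] by blast
  define q where "q = interleave (x1 # xs) ys"
  have lengths: "length (x1 # xs) = length ys"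
    using xs(2) ys(2) assms(2) by simp
  have set_q: "set q = insert x1 (set xs) \<union> set ys"
    using set_interleave[OF disjI1[OF lengths]] unfolding q_def by simp
  show ?thesis
  proof (rule that)
    show "hd q = x1"
      using hd_interleave[of "x1 # xs" ys] unfolding q_def by simp
    show "distinct q" "successively E q"
      using path_interleave[of "x1 # xs" ys] xs ys assms(1) unfolding q_def by auto
    show "length q = 2 * h"
      using length_interleave[OF disjI1[OF lengths]] lengths ys(2) unfolding q_def by simp
    show "set q \<subseteq> X \<union> Y"
      using set_q xs(3) ys(3) assms(1) by auto
    have "set q \<inter> X = insert x1 (set xs)"
      using set_q xs(3) ys(3) assms(1) disjoint by auto
    moreover have "x1 \<notin> set xs"
      using xs(3) by blast
    ultimately show "card (set q \<inter> X) = h"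
      using xs(1,2) assms(2) by (simp add: distinct_card)
    have "set q \<inter> Y = set ys"
      using set_q xs(3) ys(3) assms(1) disjoint by auto
    then show "card (set q \<inter> Y) = h"
      using ys by (simp add: distinct_card)
  qed
qed

lemma alternating_path_between:
  assumes "x1 \<in> X" "x2 \<in> X" "x1 \<noteq> x2" "0 < m" "m + 1 \<le> card X" "m \<le> card Y"
  obtains q where "hd q = x1" "last q = x2" "distinct q" "successively E q"
    "length q = 2 * m + 1" "set q \<subseteq> X \<union> Y" "card (set q \<inter> X) = m + 1" "card (set q \<inter> Y) = m"
proof -
  have "m - 1 \<le> card (X - {x1, x2})"
    using assms(1-3,5) finite_X by (simp add: card_Diff_subset)
  then obtain xs where xs: "distinct xs" "length xs = m - 1" "set xs \<subseteq> X - {x1, x2}"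
    using exists_distinct_list[of "X - {x1, x2}"] finite_X by blast
  obtain ys where ys: "distinct ys" "length ys = m" "set ys \<subseteq> Y"
    using exists_distinct_list[OF finite_Y assms(6)] by blast
  define xs' where "xs' = x1 # xs @ [x2]"
  define q where "q = interleave xs' ys"
  have lengths: "length xs' = Suc (length ys)"
    using xs(2) ys(2) assms(4) unfolding xs'_def by simp
  have xs': "distinct xs'" "set xs' \<subseteq> X"
    using xs assms(1-3) unfolding xs'_def by auto
  have set_q: "set q = set xs' \<union> set ys"
    using set_interleave[OF disjI2[OF lengths]] unfolding q_def .
  show ?thesis
  proof (rule that)
    show "hd q = x1"
      using hd_interleave[of xs' ys] unfolding q_def xs'_def by simp
    show "last q = x2"
      using last_interleave[OF lengths] unfolding q_def xs'_def by simp
    show "distinct q" "successively E q"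
      using path_interleave[of xs' ys] xs' ys unfolding q_def by auto
    show "length q = 2 * m + 1"
      using length_interleave[OF disjI2[OF lengths]] lengths ys(2) unfolding q_def by simp
    show "set q \<subseteq> X \<union> Y"
      using set_q xs'(2) ys(3) by blast
    have "set q \<inter> X = set xs'"
      using set_q xs'(2) ys(3) disjoint by auto
    then show "card (set q \<inter> X) = m + 1"
      using distinct_card[OF xs'(1)] lengths ys(2) by simp
    have "set q \<inter> Y = set ys"
      using set_q xs'(2) ys(3) disjoint by auto
    then show "card (set q \<inter> Y) = m"
      using ys by (simp add: distinct_card)
  qed
qed

lemma saving_path_via_outside_path:
  assumes w: "distinct w" "set w \<subseteq> V - (X \<union> Y)" "successively E w" "2 \<le> length w"
    and x1: "x1 \<in> X" "E (last w) x1"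
    and l: "length w \<le> l" "even (l - length w)" "l div 2 \<le> card X + 1" "l - l div 2 \<le> card Y"
  shows "\<exists>p. saving_path l p"
proof -
  define h where "h = (l - length w) div 2"
  have l_eq: "l = length w + 2 * h" and h_le: "h + 1 \<le> l div 2" "h \<le> l - l div 2"
    using l(1,2) w(4) unfolding h_def by presburger+
  have w_X: "set w \<inter> X = {}" and w_Y: "set w \<inter> Y = {}"
    using w(2) by blast+
  show ?thesis
  proof (cases "h = 0")
    case True
    then have "saving_path l w"
      using w l_eq h_le w_X w_Y unfolding saving_path_def by auto
    then show ?thesis ..
  next
    case False
    obtain q where q: "hd q = x1" "distinct q" "successively E q" "length q = 2 * h"
      "set q \<subseteq> X \<union> Y" "card (set q \<inter> X) = h" "card (set q \<inter> Y) = h"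
      using alternating_path_from[OF x1(1), of h] False l(3,4) h_le by auto
    have "q \<noteq> []" "w \<noteq> []"
      using q(4) False w(4) by auto
    then have "successively E (w @ q)"
      using w(3) q(1,3) x1(2) by (simp add: successively_append_iff)
    moreover have "distinct (w @ q)" "set (w @ q) \<subseteq> V"
      using w(1,2) q(2,5) X_subset Y_subset by auto
    moreover have "set (w @ q) \<inter> X = set q \<inter> X" "set (w @ q) \<inter> Y = set q \<inter> Y"
      using w_X w_Y by auto
    ultimately have "saving_path l (w @ q)"
      using q(4,6,7) l_eq h_le unfolding saving_path_def by auto
    then show ?thesis ..
  qed
qed

lemma saving_path_via_outside_paths:
  assumes w1: "distinct w1" "set w1 \<subseteq> V - (X \<union> Y)" "successively E w1" "w1 \<noteq> []"
    and w2: "distinct w2" "set w2 \<subseteq> V - (X \<union> Y)" "successively E w2" "w2 \<noteq> []"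
    and "set w1 \<inter> set w2 = {}"
    and x12: "x1 \<in> X" "x2 \<in> X" "x1 \<noteq> x2" "E (last w1) x1" "E x2 (hd w2)"
    and l: "3 \<le> length w1 + length w2" "length w1 + length w2 + 3 \<le> l"
      "odd (l - (length w1 + length w2))" "l div 2 \<le> card X + 1" "l - l div 2 \<le> card Y"
  shows "\<exists>p. saving_path l p"
proof -
  define k where "k = length w1 + length w2"
  define m where "m = (l - k) div 2"
  have l_eq: "l = k + 2 * m + 1"
    using l(2,3) unfolding k_def m_def by presburger
  have m_pos: "0 < m"
    using l(2) unfolding k_def m_def by simp
  have m_le: "m + 2 \<le> l div 2" "m \<le> l - l div 2"
    using l(1) l_eq unfolding k_def by simp_all
  obtain q where q: "hd q = x1" "last q = x2" "distinct q" "successively E q"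
    "length q = 2 * m + 1" "set q \<subseteq> X \<union> Y" "card (set q \<inter> X) = m + 1" "card (set q \<inter> Y) = m"
    using alternating_path_between[OF x12(1-3) m_pos] l(4,5) m_le by auto
  have "q \<noteq> []"
    using q(5) by auto
  then have "successively E (w1 @ q @ w2)"
    using w1(3,4) w2(3,4) q(1,2,4) x12(4,5) by (simp add: successively_append_iff)
  moreover have "distinct (w1 @ q @ w2)" "set (w1 @ q @ w2) \<subseteq> V"
    using w1(1,2) w2(1,2) assms(9) q(3,6) X_subset Y_subset by auto
  moreover have "set (w1 @ q @ w2) \<inter> X = set q \<inter> X" "set (w1 @ q @ w2) \<inter> Y = set q \<inter> Y"
    using w1(2) w2(2) by auto
  ultimately have "saving_path l (w1 @ q @ w2)"
    using q(5,7,8) l_eq m_le unfolding saving_path_def k_def by auto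
  then show ?thesis ..
qed

end

lemma lf_budget:
  assumes "int (card X) = lf_delta ls" "int (lf_size ls) - lf_delta ls \<le> int (card Y)"
  shows "(\<Sum>l\<leftarrow>ls. l div 2) \<le> card X + 1" "(\<Sum>l\<leftarrow>ls. l - l div 2) \<le> card Y"
proof -
  have "sum_list ls = (\<Sum>l\<leftarrow>ls. l div 2) + (\<Sum>l\<leftarrow>ls. l - l div 2)"
    by (induction ls) auto
  then show "(\<Sum>l\<leftarrow>ls. l div 2) \<le> card X + 1" "(\<Sum>l\<leftarrow>ls. l - l div 2) \<le> card Y"
    using assms unfolding lf_delta_def lf_size_def by linarith+
qed

lemma component_le_budget:
  fixes l :: nat
  assumes "l \<in> set ls" "(\<Sum>l\<leftarrow>ls. l div 2) \<le> a" "(\<Sum>l\<leftarrow>ls. l - l div 2) \<le> b"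
  shows "l div 2 \<le> a" "l - l div 2 \<le> b"
proof -
  have "f l \<le> (\<Sum>l\<leftarrow>ls. f l)" for f :: "nat \<Rightarrow> nat"
    using assms(1) by (intro member_le_sum_list) auto
  from this[of "\<lambda>l. l div 2"] this[of "\<lambda>l. l - l div 2"]
  show "l div 2 \<le> a" "l - l div 2 \<le> b"
    using assms(2,3) by simp_all
qed

theorem mainTheorem6:
  fixes V :: "'a set" and E :: "'a \<Rightarrow> 'a \<Rightarrow> bool" and ls :: "nat list"
    and X Y :: "'a set"
  assumes G: "simple_graph V E"
    and nonempty: "ls \<noteq> []"
    and sorted: "sorted_wrt (\<ge>) ls"
    and ge2: "\<forall>l\<in>set ls. l \<ge> 2"
    and ne3: "\<forall>l\<in>set ls. l \<noteq> 3"
    and not_kP5: "\<not> (\<forall>l\<in>set ls. l = 5)"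
    and XV: "X \<subseteq> V" and YV: "Y \<subseteq> V" and disj: "X \<inter> Y = {}"
    and cardX: "int (card X) = lf_delta ls"
    and cardY: "int (card Y) \<ge> int (lf_size ls) - lf_delta ls"
    and complete: "\<forall>x\<in>X. \<forall>y\<in>Y. E x y"
    and cond: "((\<exists>l\<in>set ls. even l) \<and>
                 (\<exists>v1 v2 x1. v1 \<in> V - (X \<union> Y) \<and> v2 \<in> V - (X \<union> Y) \<and> E v1 v2 \<and>
                    x1 \<in> X \<and> E v1 x1))
            \<or> ((\<forall>l\<in>set ls. odd l) \<and>
                 (\<exists>v1 v2 v3 x1. v1 \<in> V - (X \<union> Y) \<and> v2 \<in> V - (X \<union> Y) \<and> v3 \<in> V - (X \<union> Y) \<and>
                    distinct [v1, v2, v3] \<and> E v1 v2 \<and> E v2 v3 \<and> x1 \<in> X \<and> E v1 x1))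
            \<or> ((\<forall>l\<in>set ls. odd l) \<and>
                 (\<exists>v1 v2 v3 v4 x1 x2. v1 \<in> V - (X \<union> Y) \<and> v2 \<in> V - (X \<union> Y) \<and>
                    v3 \<in> V - (X \<union> Y) \<and> v4 \<in> V - (X \<union> Y) \<and> distinct [v1, v2, v3, v4] \<and>
                    E v1 v2 \<and> E v3 v4 \<and> x1 \<in> X \<and> x2 \<in> X \<and> x1 \<noteq> x2 \<and> E v1 x1 \<and> E v3 x2))"
  shows "contains_lf V E ls"
proof -
  have sym: "\<And>u v. E u v \<Longrightarrow> E v u" and irrefl: "\<And>u. \<not> E u u" and "finite V"
    using G unfolding simple_graph_def by blast+
  interpret complete_join V E X Y
    using sym complete disj XV YV \<open>finite V\<close> by unfold_locales (auto intro: finite_subset)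
  note budget = lf_budget[OF cardX cardY]
  note fits = component_le_budget[OF _ budget]
  have lengths: "2 \<le> l" "odd l \<Longrightarrow> 3 \<le> l" "odd l \<Longrightarrow> l \<noteq> 5 \<Longrightarrow> 7 \<le> l"
    if "l \<in> set ls" for l
  proof -
    have "2 \<le> l" "l \<noteq> 3"
      using ge2 ne3 that by blast+
    then show "2 \<le> l" "odd l \<Longrightarrow> 3 \<le> l" "odd l \<Longrightarrow> l \<noteq> 5 \<Longrightarrow> 7 \<le> l"
      by presburger+
  qed
  from cond have "\<exists>l\<in>set ls. \<exists>p. saving_path l p"
    apply (elim disjE conjE exE bexE)
    subgoal for v1 v2 x1 l
      using saving_path_via_outside_path[of "[v2, v1]" x1 l] fits[of l] lengths[of l] sym[of v1 v2]
        irrefl[of v1] by (cases "v1 = v2") auto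
    subgoal for v1 v2 v3 x1
      using saving_path_via_outside_path[of "[v3, v2, v1]" x1 "hd ls"] fits[of "hd ls"]
        lengths[of "hd ls"] hd_in_set[OF nonempty] sym[of v1 v2] sym[of v2 v3] by auto
    subgoal premises prems for v1 v2 v3 v4 x1 x2
    proof -
      obtain l where "l \<in> set ls" "l \<noteq> 5"
        using not_kP5 by blast
      then show ?thesis
        using saving_path_via_outside_paths[of "[v2, v1]" "[v3, v4]" x1 x2 l] fits[of l] lengths[of l]
          sym[of v1 v2] sym[of v3 x2] prems by auto
    qed
    done
  then obtain i p where "i < length ls" "saving_path (ls ! i) p"
    by (metis in_set_conv_nth)
  then show ?thesis
    using contains_lf_if_saving_path budget by blast
qed

end
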